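(* Let $G$ be an undirected graph (a digraph with symmetric edge relation, loops allowed). (i) If every connected component of $G$ is either trivial or a complete graph with loops, then $\mathbb{A}(G)$ satisfies every bracketing identity. (ii) If every connected component of $G$ is either trivial, a complete graph with loops, or a complete bipartite graph, and the last case occurs at least once, then $\mathbb{A}(G)$ satisfies a nontrivial bracketing identity $t\approx t'$ ($t,t'\in B_n$, $t\ne t'$) if and only if $M_{t,t'}$ is even. (iii) Otherwise $\mathbb{A}(G)$ satisfies no nontrivial bracketing identity.
   Context: A connected component is trivial if it is a single vertex without a loop. A complete graph with loops on a vertex set $K$ has edge set $K\times K$; a complete bipartite graph on $K$ has $K=A\cup B$ with $A,B$ nonempty and disjoint and edge set $(A\times B)\cup(B\times A)$. The graph algebra $\mathbb{A}(G)$ is the groupoid on $V\cup\{\infty\}$ with $xy=x$ if $x,y\in V$ and $(x,y)\in E$, and $xy=\infty$ otherwise; it satisfies $t\approx t'$ if $t,t'$ induce the same term operation. $B_n$ is the set of binary terms in which $x_1,\dots,x_n$ each occur once in this order. For $t\in B_n$, the rooted tree $G(t)$ is defined recursively: $G(x_i)$ is the single vertex $x_i$; $G(t_1t_2)$ is $G(t_1)\cup G(t_2)$ plus an edge from the leftmost variable of $t_1$ to the leftmost variable of $t_2$; root $x_1$. With $T=G(t)$, $T'=G(t')$ and $d_T(x)$ the depth of $x$ in $T$, $M_{t,t'}=\gcd\{|d_T(x)-d_{T'}(x)|:x\in\{x_1,\dots,x_n\}\}$. *)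

theory Defs
  imports Main
begin

definition undirected_graph :: "'a set \<Rightarrow> ('a \<times> 'a) set \<Rightarrow> bool" where
  "undirected_graph V E \<longleftrightarrow> E \<subseteq> V \<times> V \<and> sym E"

definition component :: "('a \<times> 'a) set \<Rightarrow> 'a \<Rightarrow> 'a set" where
  "component E v = {w. (v, w) \<in> E\<^sup>*}"

definition components :: "'a set \<Rightarrow> ('a \<times> 'a) set \<Rightarrow> 'a set set" where
  "components V E = component E ` V"

definition trivial_comp :: "('a \<times> 'a) set \<Rightarrow> 'a set \<Rightarrow> bool" where
  "trivial_comp E K \<longleftrightarrow> (\<exists>v. K = {v} \<and> (v, v) \<notin> E)"

definition complete_loops_comp :: "('a \<times> 'a) set \<Rightarrow> 'a set \<Rightarrow> bool" where
  "complete_loops_comp E K \<longleftrightarrow> E \<inter> (K \<times> K) = K \<times> K"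

definition complete_bipartite_comp :: "('a \<times> 'a) set \<Rightarrow> 'a set \<Rightarrow> bool" where
  "complete_bipartite_comp E K \<longleftrightarrow>
     (\<exists>A B. A \<noteq> {} \<and> B \<noteq> {} \<and> A \<inter> B = {} \<and> K = A \<union> B \<and>
            E \<inter> (K \<times> K) = (A \<times> B) \<union> (B \<times> A))"

section \<open>The graph algebra A(G) on V \<union> {\<infinity>} (\<infinity> represented by None)\<close>

definition ga_carrier :: "'a set \<Rightarrow> 'a option set" where
  "ga_carrier V = Some ` V \<union> {None}"

fun ga_mult :: "('a \<times> 'a) set \<Rightarrow> 'a option \<Rightarrow> 'a option \<Rightarrow> 'a option" where
  "ga_mult E (Some x) (Some y) = (if (x, y) \<in> E then Some x else None)"
| "ga_mult E _ _ = None"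

datatype bterm = Var nat | Mul bterm bterm

fun eval :: "('a \<times> 'a) set \<Rightarrow> (nat \<Rightarrow> 'a option) \<Rightarrow> bterm \<Rightarrow> 'a option" where
  "eval E \<rho> (Var i) = \<rho> i"
| "eval E \<rho> (Mul t1 t2) = ga_mult E (eval E \<rho> t1) (eval E \<rho> t2)"

definition satisfies :: "'a set \<Rightarrow> ('a \<times> 'a) set \<Rightarrow> bterm \<Rightarrow> bterm \<Rightarrow> bool" where
  "satisfies V E t t' \<longleftrightarrow>
     (\<forall>\<rho>. (\<forall>i. \<rho> i \<in> ga_carrier V) \<longrightarrow> eval E \<rho> t = eval E \<rho> t')"

fun leaves :: "bterm \<Rightarrow> nat list" where
  "leaves (Var i) = [i]"
| "leaves (Mul t1 t2) = leaves t1 @ leaves t2"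

definition B :: "nat \<Rightarrow> bterm set" where
  "B n = {t. leaves t = [1..<Suc n]}"

fun leftmost :: "bterm \<Rightarrow> nat" where
  "leftmost (Var i) = i"
| "leftmost (Mul t1 t2) = leftmost t1"

text \<open>Edges of G(t), oriented from parent to child; the root is leftmost t (= x_1).\<close>
fun tree_edges :: "bterm \<Rightarrow> (nat \<times> nat) set" where
  "tree_edges (Var i) = {}"
| "tree_edges (Mul t1 t2) =
     tree_edges t1 \<union> tree_edges t2 \<union> {(leftmost t1, leftmost t2)}"

definition depth :: "bterm \<Rightarrow> nat \<Rightarrow> nat" where
  "depth t x = (LEAST k. (leftmost t, x) \<in> tree_edges t ^^ k)"

definition M :: "nat \<Rightarrow> bterm \<Rightarrow> bterm \<Rightarrow> nat" where
  "M n t t' = Gcd ((\<lambda>x. nat \<bar>int (depth t x) - int (depth t' x)\<bar>) ` {1..n})"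

end

(*
  A term t of B_n evaluates in A(G) to the value of its first variable when the assignment is
  a homomorphism of the tree G(t) into G, and to \<infinity> otherwise; so t \<approx> t' holds iff G(t) and
  G(t') have the same homomorphisms into G. The image of such a homomorphism lies in a single
  component, which is nontrivial once n \<ge> 2. Every map into a complete component with loops is
  a homomorphism. A map into a complete bipartite component is one iff it alternates sides
  along the edges, i.e. iff the side of each leaf is given by the parity of its depth; with such
  a component present the identity therefore holds iff all depths in G(t) and G(t') agree
  mod 2, which is the parity of M. A connected component in which every walk of length 3 joins
  adjacent vertices is trivial, complete with loops or complete bipartite; so in any other
  component there are walks of every length m \<ge> 2 between non-adjacent vertices. Laying such a
  walk along G(t) by depth, shifted by two steps before the first leaf whose depth differs,
  gives a homomorphism of one tree that is not one of the other.
*)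
theory Submission
  imports Defs
begin

fun depth_rec :: "bterm \<Rightarrow> nat \<Rightarrow> nat" where
  "depth_rec (Var i) x = 0"
| "depth_rec (Mul t1 t2) x = (if x \<in> set (leaves t1) then depth_rec t1 x else Suc (depth_rec t2 x))"

lemma leaves_not_Nil: "leaves t \<noteq> []"
  by (induct t) auto

lemma leftmost_eq_hd_leaves: "leftmost t = hd (leaves t)"
  by (induct t) (auto simp: leaves_not_Nil)

lemma leftmost_in_leaves: "leftmost t \<in> set (leaves t)"
  by (induct t) auto

lemma leaves_eq_single_iff: "leaves t = [i] \<longleftrightarrow> t = Var i"
  by (cases t) (auto simp: append_eq_Cons_conv leaves_not_Nil)

lemma tree_edges_in_leaves:
  "(p, c) \<in> tree_edges t \<Longrightarrow> p \<in> set (leaves t) \<and> c \<in> set (leaves t)"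
  by (induct t) (auto simp: leftmost_in_leaves)

lemma tree_edge_less: "sorted_wrt (<) (leaves t) \<Longrightarrow> (p, c) \<in> tree_edges t \<Longrightarrow> p < c"
proof (induct t)
  case (Mul t1 t2)
  then show ?case
    using leftmost_in_leaves[of t1] leftmost_in_leaves[of t2] by (auto simp: sorted_wrt_append)
qed simp

lemma depth_rec_leftmost [simp]: "depth_rec t (leftmost t) = 0"
  by (induct t) (auto simp: leftmost_in_leaves)

lemma depth_rec_eq_0_iff:
  "distinct (leaves t) \<Longrightarrow> x \<in> set (leaves t) \<Longrightarrow> depth_rec t x = 0 \<longleftrightarrow> x = leftmost t"
  by (induct t) (auto simp: leftmost_in_leaves)

lemma depth_rec_tree_edge:
  "distinct (leaves t) \<Longrightarrow> (p, c) \<in> tree_edges t \<Longrightarrow> depth_rec t c = Suc (depth_rec t p)"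
proof (induct t)
  case (Mul t1 t2)
  then have "set (leaves t1) \<inter> set (leaves t2) = {}" by simp
  with Mul show ?case
    using leftmost_in_leaves[of t1] leftmost_in_leaves[of t2]
      tree_edges_in_leaves[of p c t1] tree_edges_in_leaves[of p c t2]
    by auto
qed simp

lemma leftmost_rtrancl_tree_edges:
  "x \<in> set (leaves t) \<Longrightarrow> (leftmost t, x) \<in> (tree_edges t)\<^sup>*"
proof (induct t)
  case (Mul t1 t2)
  have mono: "(tree_edges t1)\<^sup>* \<subseteq> (tree_edges (Mul t1 t2))\<^sup>*"
    "(tree_edges t2)\<^sup>* \<subseteq> (tree_edges (Mul t1 t2))\<^sup>*"
    by (auto intro!: rtrancl_mono)
  show ?case
  proof (cases "x \<in> set (leaves t1)")
    case True
    with Mul mono show ?thesis by auto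
  next
    case False
    with Mul mono have "(leftmost t2, x) \<in> (tree_edges (Mul t1 t2))\<^sup>*" by auto
    then show ?thesis by (auto intro: converse_rtrancl_into_rtrancl)
  qed
qed simp

lemma tree_edge_to_leaf:
  "x \<in> set (leaves t) \<Longrightarrow> x \<noteq> leftmost t \<Longrightarrow> \<exists>p. (p, x) \<in> tree_edges t"
  using leftmost_rtrancl_tree_edges[of x t] by (auto elim: rtranclE)

lemma depth_eq_depth_rec:
  assumes "distinct (leaves t)" "x \<in> set (leaves t)"
  shows "depth t x = depth_rec t x"
proof -
  have walk_length: "depth_rec t y = k" if "(leftmost t, y) \<in> tree_edges t ^^ k" for y k
    using that
  proof (induct k arbitrary: y)
    case (Suc k)
    then show ?case
      by (auto elim!: relpow_Suc_E dest: depth_rec_tree_edge[OF assms(1)])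
  qed simp
  obtain k where "(leftmost t, x) \<in> tree_edges t ^^ k"
    using leftmost_rtrancl_tree_edges[OF assms(2)] rtrancl_power by blast
  then show ?thesis
    unfolding depth_def using walk_length by (intro Least_equality) auto
qed

text \<open>The right factor of a product starts at its only leaf of depth 1 that lies outside
  the left factor, so the depths of the leaves determine where a bracketing splits.\<close>

lemma depth_rec_Mul_conflict:
  assumes dist: "distinct (leaves t1 @ leaves t2)"
    and split: "leaves t1 @ leaves t2 = leaves t1' @ leaves t2'"
    and suffix: "leaves t2 = us @ leaves t2'" and "us \<noteq> []"
  shows "depth_rec (Mul t1 t2) (leftmost t2') \<noteq> depth_rec (Mul t1' t2') (leftmost t2')"
proof -
  let ?y = "leftmost t2'"
  have y2: "?y \<in> set (leaves t2)" "?y \<notin> set us"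
    using suffix dist leftmost_in_leaves[of t2'] by auto
  have "?y \<noteq> leftmost t2"
    using suffix \<open>us \<noteq> []\<close> y2(2) by (auto simp: leftmost_eq_hd_leaves)
  then have "depth_rec t2 ?y \<noteq> 0"
    using depth_rec_eq_0_iff[of t2] dist y2(1) by simp
  moreover have "?y \<notin> set (leaves t1)"
    using dist y2(1) by auto
  moreover have "distinct (leaves t1' @ leaves t2')"
    using dist split by metis
  then have "?y \<notin> set (leaves t1')"
    using leftmost_in_leaves[of t2'] by auto
  ultimately show ?thesis by simp
qed

lemma leaves_factors_eq_if_depth_rec_eq:
  assumes dist: "distinct (leaves t1 @ leaves t2)"
    and split: "leaves t1 @ leaves t2 = leaves t1' @ leaves t2'"
    and depths: "\<forall>x\<in>set (leaves t1 @ leaves t2).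
      depth_rec (Mul t1 t2) x = depth_rec (Mul t1' t2') x"
  shows "leaves t1' = leaves t1" "leaves t2' = leaves t2"
proof -
  have dist': "distinct (leaves t1' @ leaves t2')" using dist split by metis
  obtain us where us: "leaves t1 = leaves t1' @ us \<and> us @ leaves t2 = leaves t2'
      \<or> leaves t1 @ us = leaves t1' \<and> leaves t2 = us @ leaves t2'"
    using split unfolding append_eq_append_conv2 by blast
  have "us = []"
  proof (rule ccontr)
    assume "us \<noteq> []"
    have "leftmost t2 \<in> set (leaves t1 @ leaves t2)"
      by (simp add: leftmost_in_leaves)
    moreover have "leftmost t2' \<in> set (leaves t1 @ leaves t2)"
      unfolding split by (simp add: leftmost_in_leaves)
    ultimately show False
      using us depth_rec_Mul_conflict[OF dist split _ \<open>us \<noteq> []\<close>]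
        depth_rec_Mul_conflict[OF dist' split[symmetric] _ \<open>us \<noteq> []\<close>] depths
      by (elim disjE conjE) (simp_all del: depth_rec.simps)
  qed
  then show "leaves t1' = leaves t1" "leaves t2' = leaves t2" using us by simp_all
qed

lemma depth_rec_inj:
  "distinct (leaves t) \<Longrightarrow> leaves t' = leaves t
   \<Longrightarrow> (\<forall>x\<in>set (leaves t). depth_rec t x = depth_rec t' x) \<Longrightarrow> t = t'"
proof (induct t arbitrary: t')
  case (Var i)
  then show ?case by (simp add: leaves_eq_single_iff)
next
  case (Mul t1 t2)
  obtain t1' t2' where t': "t' = Mul t1' t2'"
    using Mul.prems(2) leaves_not_Nil[of t1] leaves_not_Nil[of t2]
    by (cases t') (auto simp: Cons_eq_append_conv)
  have dist: "distinct (leaves t1 @ leaves t2)" using Mul.prems(1) by simp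
  have depths: "\<forall>x\<in>set (leaves t1 @ leaves t2). depth_rec (Mul t1 t2) x = depth_rec t' x"
    using Mul.prems(3) by simp
  note same_split = leaves_factors_eq_if_depth_rec_eq[OF dist _ depths[unfolded t']]
  have split: "leaves t1 @ leaves t2 = leaves t1' @ leaves t2'"
    using Mul.prems(2) t' by simp
  have "t1 = t1'"
  proof (rule Mul.hyps(1)[OF _ same_split(1)[OF split]])
    show "\<forall>x\<in>set (leaves t1). depth_rec t1 x = depth_rec t1' x"
      using depths same_split[OF split] t' by (metis UnCI depth_rec.simps(2) set_append)
  qed (use dist in simp)
  moreover have "t2 = t2'"
  proof (rule Mul.hyps(2)[OF _ same_split(2)[OF split]])
    show "\<forall>x\<in>set (leaves t2). depth_rec t2 x = depth_rec t2' x"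
    proof
      fix x assume "x \<in> set (leaves t2)"
      moreover from this have "x \<notin> set (leaves t1)" using dist by auto
      ultimately show "depth_rec t2 x = depth_rec t2' x"
        using depths[rule_format, of x] same_split[OF split] t' by simp
    qed
  qed (use dist in simp)
  ultimately show ?case using t' by simp
qed

lemma parity_flip_along_tree:
  assumes "distinct (leaves t)" and flip: "\<And>p c. (p, c) \<in> tree_edges t \<Longrightarrow> P c \<longleftrightarrow> \<not> P p"
    and "x \<in> set (leaves t)"
  shows "P x \<longleftrightarrow> (P (leftmost t) \<longleftrightarrow> even (depth_rec t x))"
  using leftmost_rtrancl_tree_edges[OF assms(3)]
proof (induct rule: rtrancl_induct)
  case (step y z)
  then show ?case using flip depth_rec_tree_edge[OF assms(1)] by auto
qed simp

definition tree_hom :: "('a \<times> 'a) set \<Rightarrow> (nat \<Rightarrow> 'a) \<Rightarrow> bterm \<Rightarrow> bool" where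
  "tree_hom E f t \<longleftrightarrow> (\<forall>(p, c) \<in> tree_edges t. (f p, f c) \<in> E)"

lemma tree_hom_cong:
  "(\<And>i. i \<in> set (leaves t) \<Longrightarrow> f i = g i) \<Longrightarrow> tree_hom E f t \<longleftrightarrow> tree_hom E g t"
  unfolding tree_hom_def by (fastforce dest: tree_edges_in_leaves)

lemma eval_eq_tree_hom:
  "eval E \<rho> t =
     (if (\<forall>i\<in>set (leaves t). \<rho> i \<noteq> None) \<and> tree_hom E (\<lambda>i. the (\<rho> i)) t
      then \<rho> (leftmost t) else None)"
proof (induct t)
  case (Mul t1 t2)
  let ?ok = "\<lambda>s. (\<forall>i\<in>set (leaves s). \<rho> i \<noteq> None) \<and> tree_hom E (\<lambda>i. the (\<rho> i)) s"
  have ok_Mul: "?ok (Mul t1 t2) \<longleftrightarrow>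
      ?ok t1 \<and> ?ok t2 \<and> (the (\<rho> (leftmost t1)), the (\<rho> (leftmost t2))) \<in> E"
    by (auto simp: tree_hom_def)
  show ?case
  proof (cases "?ok t1 \<and> ?ok t2")
    case True
    then obtain a b where "\<rho> (leftmost t1) = Some a" "\<rho> (leftmost t2) = Some b"
      using leftmost_in_leaves[of t1] leftmost_in_leaves[of t2] by blast
    with True Mul.hyps ok_Mul show ?thesis by simp
  next
    case False
    then have "eval E \<rho> t1 = None \<or> eval E \<rho> t2 = None"
      using Mul.hyps by auto
    then have "eval E \<rho> (Mul t1 t2) = None"
      by (cases "eval E \<rho> t1"; cases "eval E \<rho> t2") auto
    with False ok_Mul show ?thesis by auto
  qed
qed (simp add: tree_hom_def)

lemma satisfies_iff_tree_hom:
  assumes leaves: "set (leaves t') = set (leaves t)" and root: "leftmost t' = leftmost t"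
  shows "satisfies V E t t' \<longleftrightarrow>
    (\<forall>f. f ` set (leaves t) \<subseteq> V \<longrightarrow> (tree_hom E f t \<longleftrightarrow> tree_hom E f t'))"
proof (rule iffI, intro allI impI)
  fix f assume sat: "satisfies V E t t'" and fV: "f ` set (leaves t) \<subseteq> V"
  define \<rho> where "\<rho> i = (if i \<in> set (leaves t) then Some (f i) else None)" for i
  have "\<forall>i. \<rho> i \<in> ga_carrier V"
    using fV by (auto simp: \<rho>_def ga_carrier_def)
  then have "eval E \<rho> t = eval E \<rho> t'"
    using sat by (simp add: satisfies_def)
  moreover have "tree_hom E (\<lambda>i. the (\<rho> i)) s \<longleftrightarrow> tree_hom E f s"
    if "set (leaves s) = set (leaves t)" for s
    using that by (intro tree_hom_cong) (simp add: \<rho>_def)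
  ultimately show "tree_hom E f t \<longleftrightarrow> tree_hom E f t'"
    using leaves root leftmost_in_leaves[of t]
    by (simp add: eval_eq_tree_hom \<rho>_def split: if_splits)
next
  assume hom: "\<forall>f. f ` set (leaves t) \<subseteq> V \<longrightarrow> (tree_hom E f t \<longleftrightarrow> tree_hom E f t')"
  show "satisfies V E t t'"
    unfolding satisfies_def
  proof safe
    fix \<rho> :: "nat \<Rightarrow> 'a option" assume car: "\<forall>i. \<rho> i \<in> ga_carrier V"
    show "eval E \<rho> t = eval E \<rho> t'"
    proof (cases "\<forall>i\<in>set (leaves t). \<rho> i \<noteq> None")
      case True
      have "(\<lambda>i. the (\<rho> i)) ` set (leaves t) \<subseteq> V"
      proof clarify
        fix i assume "i \<in> set (leaves t)"
        with True car[rule_format, of i] show "the (\<rho> i) \<in> V"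
          by (auto simp: ga_carrier_def)
      qed
      with hom have "tree_hom E (\<lambda>i. the (\<rho> i)) t \<longleftrightarrow> tree_hom E (\<lambda>i. the (\<rho> i)) t'"
        by blast
      with True leaves root show ?thesis by (simp add: eval_eq_tree_hom)
    next
      case False
      then have "eval E \<rho> s = None" if "set (leaves s) = set (leaves t)" for s
        using that by (auto simp: eval_eq_tree_hom)
      with leaves show ?thesis by simp
    qed
  qed
qed

lemma tree_hom_in_component:
  assumes "tree_hom E f t" "x \<in> set (leaves t)"
  shows "f x \<in> component E (f (leftmost t))"
  using leftmost_rtrancl_tree_edges[OF assms(2)]
proof (induct rule: rtrancl_induct)
  case (step y z)
  then show ?case
    using assms(1) by (auto simp: tree_hom_def component_def intro: rtrancl_into_rtrancl)
qed (simp add: component_def)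

lemma tree_hom_not_trivial_comp:
  assumes "tree_hom E f t" "tree_edges t \<noteq> {}"
  shows "\<not> trivial_comp E (component E (f (leftmost t)))"
proof
  assume "trivial_comp E (component E (f (leftmost t)))"
  then obtain w where w: "component E (f (leftmost t)) = {w}" "(w, w) \<notin> E"
    unfolding trivial_comp_def by blast
  obtain p c where pc: "(p, c) \<in> tree_edges t" using assms(2) by auto
  then have "f p = w" "f c = w"
    using tree_hom_in_component[OF assms(1)] tree_edges_in_leaves[OF pc] w(1) by blast+
  then show False using assms(1) pc w(2) by (auto simp: tree_hom_def)
qed

definition walk :: "('a \<times> 'a) set \<Rightarrow> (nat \<Rightarrow> 'a) \<Rightarrow> bool" where
  "walk E W \<longleftrightarrow> (\<forall>i. (W i, W (Suc i)) \<in> E)"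

lemma walk_case_nat: "walk E (case_nat x W) \<longleftrightarrow> (x, W 0) \<in> E \<and> walk E W"
  unfolding walk_def by (metis nat.exhaust nat.simps(4,5))

lemma walk_alternate: "sym E \<Longrightarrow> (x, y) \<in> E \<Longrightarrow> walk E (\<lambda>i. if even i then x else y)"
  unfolding walk_def by (auto dest: symD)

lemma sym_relpow:
  assumes "sym E"
  shows "sym (E ^^ n)"
proof (induct n)
  case (Suc n)
  show ?case
  proof (rule symI)
    fix x y assume "(x, y) \<in> E ^^ Suc n"
    then obtain z where "(x, z) \<in> E ^^ n" "(z, y) \<in> E" by (rule relpow_Suc_E)
    then have "(y, z) \<in> E" "(z, x) \<in> E ^^ n" using assms Suc by (auto dest: symD)
    then show "(y, x) \<in> E ^^ Suc n" by (rule relpow_Suc_I2)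
  qed
qed (simp add: sym_Id)

lemma relpow_walk:
  assumes "sym E" "(x, y) \<in> E ^^ m" "0 < m"
  shows "\<exists>W. walk E W \<and> W 0 = x \<and> W m = y"
  using assms(2,3)
proof (induct m arbitrary: x)
  case (Suc m)
  then obtain z where z: "(x, z) \<in> E" "(z, y) \<in> E ^^ m" by (blast elim: relpow_Suc_E2)
  show ?case
  proof (cases "m = 0")
    case True
    then show ?thesis using z walk_alternate[OF assms(1) z(1)] by (intro exI) auto
  next
    case False
    then obtain W where "walk E W" "W 0 = z" "W m = y" using Suc.hyps z(2) by blast
    then show ?thesis using z(1) by (intro exI[of _ "case_nat x W"]) (simp add: walk_case_nat)
  qed
qed simp

lemma walk_shift:
  assumes "sym E" "walk E W"
  shows "\<exists>W'. walk E W' \<and> (\<forall>i. W' (a + i) = W i)"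
proof (induct a)
  case (Suc a)
  then obtain W' where W': "walk E W'" "\<forall>i. W' (a + i) = W i" by blast
  then have "(W' 1, W' 0) \<in> E" using assms(1) by (auto simp: walk_def dest: symD)
  then show ?case using W' by (intro exI[of _ "case_nat (W' 1) W'"]) (simp add: walk_case_nat)
qed (use assms(2) in auto)

definition adjacent_ends :: "('a \<times> 'a) set \<Rightarrow> 'a set \<Rightarrow> nat \<Rightarrow> bool" where
  "adjacent_ends E K m \<longleftrightarrow> (\<forall>x\<in>K. \<forall>y. (x, y) \<in> E ^^ m \<longrightarrow> (x, y) \<in> E)"

lemma adjacent_ends_3_if_2:
  assumes "adjacent_ends E K 2"
  shows "adjacent_ends E K 3"
  unfolding adjacent_ends_def
proof clarify
  fix x y assume "x \<in> K" "(x, y) \<in> E ^^ 3"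
  then obtain z where "(x, z) \<in> E ^^ 2" "(z, y) \<in> E"
    by (auto simp: eval_nat_numeral elim: relpow_Suc_E)
  then have "(x, z) \<in> E"
    using assms \<open>x \<in> K\<close> unfolding adjacent_ends_def by blast
  then have "(x, y) \<in> E ^^ Suc 1"
    using \<open>(z, y) \<in> E\<close> by (auto intro: relpow_Suc_I)
  then have "(x, y) \<in> E ^^ 2"
    by (simp only: Suc_1)
  then show "(x, y) \<in> E"
    using assms \<open>x \<in> K\<close> unfolding adjacent_ends_def by blast
qed

lemma adjacent_ends_odd:
  assumes "adjacent_ends E K 3" "odd m"
  shows "adjacent_ends E K m"
proof -
  have "adjacent_ends E K (2 * k + 1)" for k
  proof (induct k)
    case (Suc k)
    show ?case
      unfolding adjacent_ends_def
    proof clarify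
      fix x y assume "x \<in> K" "(x, y) \<in> E ^^ (2 * Suc k + 1)"
      then obtain z where "(x, z) \<in> E ^^ (2 * k + 1)" "(z, y) \<in> E ^^ 2"
        using relpow_add[of "2 * k + 1" 2 E] by auto
      then have "(x, z) \<in> E ^^ 1" "(z, y) \<in> E ^^ 2"
        using Suc \<open>x \<in> K\<close> unfolding adjacent_ends_def by auto
      then have "(x, y) \<in> E ^^ 3"
        using relpow_trans by (metis one_plus_numeral semiring_norm(3))
      then show "(x, y) \<in> E"
        using assms(1) \<open>x \<in> K\<close> unfolding adjacent_ends_def by blast
    qed
  qed (simp add: adjacent_ends_def)
  then show ?thesis using \<open>odd m\<close> by (auto elim: oddE)
qed

lemma adjacent_ends_if_add_2:
  assumes "sym E" "0 < m" "adjacent_ends E K (m + 2)"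
  shows "adjacent_ends E K m"
  unfolding adjacent_ends_def
proof clarify
  fix x y assume "x \<in> K" and xy: "(x, y) \<in> E ^^ m"
  obtain m' where "m = Suc m'" using \<open>0 < m\<close> gr0_conv_Suc by blast
  with xy obtain w where "(x, w) \<in> E" by (blast elim: relpow_Suc_E2)
  then have "(x, x) \<in> E ^^ 2"
    using assms(1) by (auto simp: numeral_2_eq_2 dest: symD intro: relpow_Suc_I2)
  then have "(x, y) \<in> E ^^ (m + 2)"
    using relpow_trans[OF _ xy, of x 2] by (simp only: add.commute)
  then show "(x, y) \<in> E" using assms(3) \<open>x \<in> K\<close> unfolding adjacent_ends_def by blast
qed

lemma component_relpow:
  assumes "sym E" "x \<in> component E v" "y \<in> component E v"
  shows "\<exists>k. (x, y) \<in> E ^^ k"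
proof -
  have "(x, v) \<in> E\<^sup>*"
    using assms(2) sym_rtrancl[OF assms(1)] by (auto simp: component_def dest: symD)
  then have "(x, y) \<in> E\<^sup>*" using assms(3) by (simp add: component_def)
  then show ?thesis by (simp add: rtrancl_power)
qed

definition parity_class :: "('a \<times> 'a) set \<Rightarrow> 'a \<Rightarrow> bool \<Rightarrow> 'a set" where
  "parity_class E v e = {y. \<exists>j. (v, y) \<in> E ^^ j \<and> even j = e}"

lemma component_eq_parity_classes:
  "component E v = parity_class E v True \<union> parity_class E v False"
  unfolding parity_class_def component_def rtrancl_power by blast

lemma parity_class_step:
  assumes "x \<in> parity_class E v e" "(x, y) \<in> E"
  shows "y \<in> parity_class E v (\<not> e)"
proof -
  obtain j where "(v, x) \<in> E ^^ j" "even j = e"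
    using assms(1) unfolding parity_class_def by blast
  then have "(v, y) \<in> E ^^ Suc j" "even (Suc j) = (\<not> e)"
    using relpow_Suc_I[OF _ assms(2)] by auto
  then show ?thesis unfolding parity_class_def by blast
qed

context
  fixes E :: "('a \<times> 'a) set" and v :: 'a
  assumes sym: "sym E" and odd_adjacent: "\<And>m. odd m \<Longrightarrow> adjacent_ends E (component E v) m"
begin

private lemma odd_walk_edge:
  "x \<in> component E v \<Longrightarrow> (x, y) \<in> E ^^ j \<Longrightarrow> odd j \<Longrightarrow> (x, y) \<in> E"
  using odd_adjacent by (auto simp: adjacent_ends_def)

text \<open>A loop lets walks between any two vertices of the component change parity.\<close>

lemma complete_loops_comp_if_loop:
  assumes "w \<in> component E v" "(w, w) \<in> E"
  shows "complete_loops_comp E (component E v)"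
proof -
  have "(x, y) \<in> E" if xy: "x \<in> component E v" "y \<in> component E v" for x y
  proof -
    obtain a b where xw: "(x, w) \<in> E ^^ a" and wy: "(w, y) \<in> E ^^ b"
      using component_relpow[OF sym xy(1) assms(1)] component_relpow[OF sym assms(1) xy(2)]
      by blast
    have "(x, w) \<in> E ^^ Suc a" using relpow_Suc_I[OF xw assms(2)] .
    then have "(x, y) \<in> E ^^ (a + b)" "(x, y) \<in> E ^^ (Suc a + b)"
      using relpow_trans[OF xw wy] relpow_trans[OF _ wy] by blast+
    moreover have "odd (a + b) \<or> odd (Suc a + b)" by presburger
    ultimately show ?thesis
      using odd_walk_edge[OF xy(1)] by blast
  qed
  then show ?thesis unfolding complete_loops_comp_def by blast
qed

lemma parity_class_cross_edge:
  assumes "x \<in> parity_class E v True" "y \<in> parity_class E v False"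
  shows "(x, y) \<in> E"
proof -
  obtain i j where "even i" "odd j" and vx: "(v, x) \<in> E ^^ i" and vy: "(v, y) \<in> E ^^ j"
    using assms unfolding parity_class_def by (simp only: mem_Collect_eq eq_True eq_False) blast
  have "(x, y) \<in> E ^^ (i + j)"
    using relpow_trans[OF symD[OF sym_relpow[OF sym] vx] vy] .
  moreover have "odd (i + j)" using \<open>even i\<close> \<open>odd j\<close> by simp
  moreover have "x \<in> component E v" using assms(1) component_eq_parity_classes[of E v] by simp
  ultimately show ?thesis using odd_walk_edge by blast
qed

lemma trivial_or_complete_bipartite_if_loopless:
  assumes loopless: "\<forall>w\<in>component E v. (w, w) \<notin> E"
  shows "trivial_comp E (component E v) \<or> complete_bipartite_comp E (component E v)"
proof -
  let ?K = "component E v"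
  define X Y where "X = parity_class E v True" and "Y = parity_class E v False"
  have K: "?K = X \<union> Y" unfolding X_def Y_def by (rule component_eq_parity_classes)
  have cross: "(x, y) \<in> E" "(y, x) \<in> E" if "x \<in> X" "y \<in> Y" for x y
    using parity_class_cross_edge that symD[OF sym] unfolding X_def Y_def by blast+
  have step: "y \<in> Y" if "x \<in> X" "(x, y) \<in> E" for x y
    using parity_class_step[of x E v True y] that unfolding X_def Y_def by simp
  have step': "y \<in> X" if "x \<in> Y" "(x, y) \<in> E" for x y
    using parity_class_step[of x E v False y] that unfolding X_def Y_def by simp
  have disjoint: "X \<inter> Y = {}"
    using cross(1) loopless K by blast
  have edges: "E \<inter> (?K \<times> ?K) = X \<times> Y \<union> Y \<times> X"
    using K cross step step' by blast
  have "v \<in> X" unfolding X_def parity_class_def by (auto intro!: exI[of _ 0])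
  show ?thesis
  proof (cases "Y = {}")
    case True
    then have "(v, w) \<notin> E" for w using step \<open>v \<in> X\<close> by blast
    then have "?K = {v}" unfolding component_def by (auto elim: converse_rtranclE)
    then show ?thesis using loopless unfolding trivial_comp_def by auto
  next
    case False
    then have "complete_bipartite_comp E ?K"
      unfolding complete_bipartite_comp_def using \<open>v \<in> X\<close> disjoint K edges by blast
    then show ?thesis ..
  qed
qed

lemma component_classification:
  "trivial_comp E (component E v) \<or> complete_loops_comp E (component E v)
   \<or> complete_bipartite_comp E (component E v)"
proof (cases "\<exists>w\<in>component E v. (w, w) \<in> E")
  case True
  then show ?thesis using complete_loops_comp_if_loop by blast
next
  case False
  then show ?thesis using trivial_or_complete_bipartite_if_loopless by blast
qed

end

lemma not_adjacent_ends_if_bad_component: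
  assumes sym: "sym E"
    and bad: "\<not> (trivial_comp E (component E v) \<or> complete_loops_comp E (component E v)
               \<or> complete_bipartite_comp E (component E v))"
    and "2 \<le> m"
  shows "\<not> adjacent_ends E (component E v) m"
  using \<open>2 \<le> m\<close>
proof (induct m rule: less_induct)
  case (less m)
  have not3: "\<not> adjacent_ends E (component E v) 3"
  proof
    assume "adjacent_ends E (component E v) 3"
    then have "\<And>m. odd m \<Longrightarrow> adjacent_ends E (component E v) m"
      using adjacent_ends_odd by blast
    then show False using component_classification[OF sym] bad by blast
  qed
  show ?case
  proof (cases "m \<le> 3")
    case True
    then have "m = 2 \<or> m = 3" using less.prems by auto
    then show ?thesis using not3 adjacent_ends_3_if_2 by blast
  next
    case False
    then have "\<not> adjacent_ends E (component E v) (m - 2)" "0 < m - 2"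
      using less.hyps[of "m - 2"] by auto
    moreover have "m - 2 + 2 = m" using False by simp
    ultimately show ?thesis
      using adjacent_ends_if_add_2[OF sym, of "m - 2"] by metis
  qed
qed

lemma bad_component_walk:
  assumes sym: "sym E"
    and bad: "\<not> (trivial_comp E (component E v) \<or> complete_loops_comp E (component E v)
               \<or> complete_bipartite_comp E (component E v))"
    and "2 \<le> m"
  shows "\<exists>W. walk E W \<and> (W a, W (a + m)) \<notin> E"
proof -
  obtain x y where "(x, y) \<in> E ^^ m" "(x, y) \<notin> E"
    using not_adjacent_ends_if_bad_component[OF assms] unfolding adjacent_ends_def by blast
  moreover have "0 < m" using \<open>2 \<le> m\<close> by simp
  ultimately obtain W where W: "walk E W" "(W 0, W m) \<notin> E"
    using relpow_walk[OF sym] by metis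
  then obtain W' where "walk E W'" "\<forall>i. W' (a + i) = W i"
    using walk_shift[OF sym] by blast
  then show ?thesis using W(2) by (metis add_0_right)
qed

lemma leaves_B: "t \<in> B n \<Longrightarrow> leaves t = [1..<Suc n]"
  by (simp add: B_def)

lemma set_leaves_B: "t \<in> B n \<Longrightarrow> set (leaves t) = {1..n}"
  by (auto simp: leaves_B)

lemma sorted_leaves_B: "t \<in> B n \<Longrightarrow> sorted_wrt (<) (leaves t)"
  by (simp add: leaves_B del: upt_Suc)

lemma distinct_leaves_B: "t \<in> B n \<Longrightarrow> distinct (leaves t)"
  by (simp add: leaves_B)

lemma leftmost_B: "t \<in> B n \<Longrightarrow> leftmost t = 1"
  using leaves_not_Nil[of t] by (simp add: leaves_B leftmost_eq_hd_leaves hd_upt del: upt_Suc)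

lemma two_le_if_B_ne:
  assumes "t \<in> B n" "t' \<in> B n" "t \<noteq> t'"
  shows "2 \<le> n"
proof (rule ccontr)
  assume "\<not> 2 \<le> n"
  moreover have "n \<noteq> 0" using leaves_not_Nil[of t] leaves_B[OF assms(1)] by (cases n) auto
  ultimately have "n = 1" by simp
  then have "t = Var 1" "t' = Var 1"
    using leaves_B[OF assms(1)] leaves_B[OF assms(2)] by (simp_all add: leaves_eq_single_iff)
  then show False using assms(3) by simp
qed

lemma tree_edges_B_ne:
  assumes "t \<in> B n" "2 \<le> n"
  shows "tree_edges t \<noteq> {}"
proof
  assume "tree_edges t = {}"
  then obtain i where "t = Var i" by (cases t) auto
  moreover have "length (leaves t) = n" using leaves_B[OF assms(1)] by simp
  ultimately show False using assms(2) by simp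
qed

lemma satisfies_B_iff:
  assumes "t \<in> B n" "t' \<in> B n"
  shows "satisfies V E t t' \<longleftrightarrow>
    (\<forall>f. f ` {1..n} \<subseteq> V \<longrightarrow> (tree_hom E f t \<longleftrightarrow> tree_hom E f t'))"
proof -
  have "set (leaves t') = set (leaves t)" "leftmost t' = leftmost t"
    using assms by (simp_all add: leaves_B leftmost_B)
  from satisfies_iff_tree_hom[OF this] show ?thesis
    unfolding set_leaves_B[OF assms(1)] .
qed

lemma even_M_iff:
  assumes "t \<in> B n" "t' \<in> B n"
  shows "even (M n t t') \<longleftrightarrow> (\<forall>x\<in>{1..n}. even (depth_rec t x) \<longleftrightarrow> even (depth_rec t' x))"
proof -
  have "even (nat \<bar>int a - int b\<bar>) \<longleftrightarrow> (even a \<longleftrightarrow> even b)" for a b :: nat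
    by (cases "a \<le> b") (auto simp: nat_diff_distrib' simp flip: of_nat_diff)
  then show ?thesis
    using assms depth_eq_depth_rec[OF distinct_leaves_B] set_leaves_B
    by (simp add: M_def dvd_Gcd_iff)
qed

lemma tree_hom_transfer_complete_loops:
  assumes "tree_hom E f t" "complete_loops_comp E (component E (f (leftmost t)))"
    and "set (leaves t') = set (leaves t)"
  shows "tree_hom E f t'"
  using assms tree_hom_in_component[OF assms(1)] tree_edges_in_leaves[of _ _ t']
  unfolding tree_hom_def complete_loops_comp_def by blast

lemma tree_hom_transfer_complete_bipartite:
  assumes hom: "tree_hom E f t" and bip: "complete_bipartite_comp E (component E (f (leftmost t)))"
    and leaves: "leaves t' = leaves t" and dist: "distinct (leaves t)"
    and parity: "\<forall>x\<in>set (leaves t). even (depth_rec t x) \<longleftrightarrow> even (depth_rec t' x)"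
  shows "tree_hom E f t'"
proof -
  let ?K = "component E (f (leftmost t))"
  obtain X Y where XY: "X \<inter> Y = {}" "?K = X \<union> Y" "E \<inter> (?K \<times> ?K) = X \<times> Y \<union> Y \<times> X"
    using bip unfolding complete_bipartite_comp_def by blast
  have in_K: "f x \<in> ?K" if "x \<in> set (leaves t)" for x
    using tree_hom_in_component[OF hom that] .
  have "f c \<in> X \<longleftrightarrow> f p \<notin> X" if "(p, c) \<in> tree_edges t" for p c
    using hom that in_K tree_edges_in_leaves[OF that] XY unfolding tree_hom_def by blast
  then have side: "f x \<in> X \<longleftrightarrow> (f (leftmost t) \<in> X \<longleftrightarrow> even (depth_rec t' x))"
    if "x \<in> set (leaves t)" for x
    using parity_flip_along_tree[OF dist _ that, of "\<lambda>i. f i \<in> X"] parity that by blast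
  show ?thesis
    unfolding tree_hom_def
  proof clarify
    fix p c assume pc: "(p, c) \<in> tree_edges t'"
    then have "p \<in> set (leaves t)" "c \<in> set (leaves t)"
      using tree_edges_in_leaves[OF pc] leaves by simp_all
    moreover have "depth_rec t' c = Suc (depth_rec t' p)"
      using depth_rec_tree_edge[OF _ pc] dist leaves by simp
    ultimately have "f c \<in> X \<longleftrightarrow> f p \<notin> X"
      using side by simp
    moreover have "f p \<in> X \<union> Y" "f c \<in> X \<union> Y"
      using in_K XY(2) \<open>p \<in> set (leaves t)\<close> \<open>c \<in> set (leaves t)\<close> by auto
    ultimately have "(f p, f c) \<in> X \<times> Y \<union> Y \<times> X"
      using XY(1) by blast
    then show "(f p, f c) \<in> E" using XY(3) by blast
  qed
qed

lemma loopless_edge_if_complete_bipartite: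
  assumes "complete_bipartite_comp E K"
  obtains a b where "(a, b) \<in> E" "(b, a) \<in> E" "(a, a) \<notin> E" "(b, b) \<notin> E"
proof -
  obtain X Y where XY: "X \<noteq> {}" "Y \<noteq> {}" "X \<inter> Y = {}" "K = X \<union> Y"
    "E \<inter> (K \<times> K) = X \<times> Y \<union> Y \<times> X"
    using assms unfolding complete_bipartite_comp_def by blast
  then obtain a b where "a \<in> X" "b \<in> Y" by blast
  with XY have "(a, b) \<in> E" "(b, a) \<in> E" "(a, a) \<notin> E" "(b, b) \<notin> E" by blast+
  then show ?thesis by (rule that)
qed

lemma depth_parity_if_satisfies:
  assumes EV: "E \<subseteq> V \<times> V" and ab: "(a, b) \<in> E" "(b, a) \<in> E" "(a, a) \<notin> E" "(b, b) \<notin> E"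
    and t: "t \<in> B n" and t': "t' \<in> B n" and sat: "satisfies V E t t'"
  shows "\<forall>x\<in>{1..n}. even (depth_rec t x) \<longleftrightarrow> even (depth_rec t' x)"
proof
  fix x assume x: "x \<in> {1..n}"
  define f where "f i = (if even (depth_rec t i) then a else b)" for i
  have "f ` {1..n} \<subseteq> V" using EV ab(1) by (auto simp: f_def)
  moreover have "tree_hom E f t"
    using depth_rec_tree_edge[OF distinct_leaves_B[OF t]] ab(1,2)
    unfolding tree_hom_def f_def by auto
  ultimately have "tree_hom E f t'" using sat satisfies_B_iff[OF t t'] by blast
  then have "even (depth_rec t c) \<longleftrightarrow> \<not> even (depth_rec t p)" if "(p, c) \<in> tree_edges t'" for p c
    using that ab(3,4) unfolding tree_hom_def f_def by (auto split: if_splits)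
  moreover have "depth_rec t 1 = 0"
    using depth_rec_leftmost[of t] by (simp add: leftmost_B[OF t])
  ultimately show "even (depth_rec t x) \<longleftrightarrow> even (depth_rec t' x)"
    using parity_flip_along_tree[OF distinct_leaves_B[OF t'], of "\<lambda>i. even (depth_rec t i)" x]
      x set_leaves_B[OF t'] leftmost_B[OF t'] by simp
qed

lemma tree_hom_B_component:
  assumes "s \<in> B n" "2 \<le> n" "f ` {1..n} \<subseteq> V" "tree_hom E f s"
  shows "component E (f (leftmost s)) \<in> components V E"
    and "\<not> trivial_comp E (component E (f (leftmost s)))"
proof -
  have "f (leftmost s) \<in> V" using assms(2,3) leftmost_B[OF assms(1)] by auto
  then show "component E (f (leftmost s)) \<in> components V E" by (simp add: components_def)
  show "\<not> trivial_comp E (component E (f (leftmost s)))"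
    using tree_hom_not_trivial_comp[OF assms(4) tree_edges_B_ne[OF assms(1,2)]] .
qed

lemma satisfies_if_complete_loops_components:
  assumes comps: "\<forall>K\<in>components V E. trivial_comp E K \<or> complete_loops_comp E K"
    and t: "t \<in> B n" and t': "t' \<in> B n"
  shows "satisfies V E t t'"
proof (cases "t = t'")
  case False
  have "tree_hom E f s'"
    if s: "s \<in> B n" "s' \<in> B n" and f: "f ` {1..n} \<subseteq> V" "tree_hom E f s" for f s s'
  proof (rule tree_hom_transfer_complete_loops[OF f(2)])
    show "complete_loops_comp E (component E (f (leftmost s)))"
      using comps tree_hom_B_component[OF s(1) two_le_if_B_ne[OF t t' False] f] by blast
    show "set (leaves s') = set (leaves s)"
      using s by (simp add: set_leaves_B)
  qed
  then show ?thesis using satisfies_B_iff[OF t t'] t t' by blast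
qed (simp add: satisfies_def)

lemma satisfies_if_depth_parity:
  assumes comps: "\<forall>K\<in>components V E.
      trivial_comp E K \<or> complete_loops_comp E K \<or> complete_bipartite_comp E K"
    and t: "t \<in> B n" and t': "t' \<in> B n" and "t \<noteq> t'"
    and parity: "\<forall>x\<in>{1..n}. even (depth_rec t x) \<longleftrightarrow> even (depth_rec t' x)"
  shows "satisfies V E t t'"
proof -
  have transfer: "tree_hom E f s'"
    if s: "s \<in> B n" "s' \<in> B n"
      and parity_s: "\<forall>x\<in>{1..n}. even (depth_rec s x) \<longleftrightarrow> even (depth_rec s' x)"
      and f: "f ` {1..n} \<subseteq> V" "tree_hom E f s" for f s s'
  proof -
    note component = tree_hom_B_component[OF s(1) two_le_if_B_ne[OF t t' \<open>t \<noteq> t'\<close>] f]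
    have leaves: "leaves s' = leaves s" using s by (simp add: leaves_B)
    show ?thesis
    proof (cases "complete_loops_comp E (component E (f (leftmost s)))")
      case True
      then show ?thesis using tree_hom_transfer_complete_loops[OF f(2)] leaves by simp
    next
      case False
      then have "complete_bipartite_comp E (component E (f (leftmost s)))"
        using comps component by blast
      moreover have "\<forall>x\<in>set (leaves s). even (depth_rec s x) \<longleftrightarrow> even (depth_rec s' x)"
        using parity_s set_leaves_B[OF s(1)] by simp
      ultimately show ?thesis
        using tree_hom_transfer_complete_bipartite[OF f(2) _ leaves distinct_leaves_B[OF s(1)]]
        by simp
    qed
  qed
  have "\<forall>x\<in>{1..n}. even (depth_rec t' x) \<longleftrightarrow> even (depth_rec t x)" using parity by simp
  then show ?thesis
    unfolding satisfies_B_iff[OF t t'] using transfer[OF t t' parity] transfer[OF t' t] by blast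
qed

lemma tree_hom_along_walk:
  assumes "sym E" "walk E W" "sorted_wrt (<) (leaves t)"
  shows "tree_hom E (\<lambda>y. W (depth_rec t y + (if y < x then 2 else 0))) t"
  unfolding tree_hom_def
proof clarify
  fix q y assume qy: "(q, y) \<in> tree_edges t"
  have "q < y" using tree_edge_less[OF assms(3) qy] .
  moreover have "depth_rec t y = Suc (depth_rec t q)"
    using depth_rec_tree_edge[OF _ qy] assms(3) by (simp add: strict_sorted_iff)
  moreover have "(W i, W (Suc i)) \<in> E" "(W (Suc i), W i) \<in> E" for i
    using assms(1,2) unfolding walk_def by (auto dest: symD)
  ultimately show "(W (depth_rec t q + (if q < x then 2 else 0)),
      W (depth_rec t y + (if y < x then 2 else 0))) \<in> E"
    by (cases "y < x"; cases "q < x") (auto simp: numeral_2_eq_2)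
qed

text \<open>At the first leaf x whose depth in t is smaller than in t', its parent p in G(t') is
  at the same depth in both trees. Following a walk by depth in t, but two steps further on for
  the leaves before x, sends p and x to the ends of a subwalk of length
  depth t' x + 1 - depth t x, which is at least 2.\<close>

lemma tree_hom_separation:
  assumes EV: "E \<subseteq> V \<times> V" and sym: "sym E"
    and walks: "\<And>m a. 2 \<le> m \<Longrightarrow> \<exists>W. walk E W \<and> (W a, W (a + m)) \<notin> E"
    and leaves: "leaves t' = leaves t" and sorted: "sorted_wrt (<) (leaves t)"
    and x: "x \<in> set (leaves t)" and less: "depth_rec t x < depth_rec t' x"
    and agree: "\<And>y. y \<in> set (leaves t) \<Longrightarrow> y < x \<Longrightarrow> depth_rec t y = depth_rec t' y"
  shows "\<exists>f. f ` set (leaves t) \<subseteq> V \<and> tree_hom E f t \<and> \<not> tree_hom E f t'"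
proof -
  have dist: "distinct (leaves t')" using sorted leaves by (simp add: strict_sorted_iff)
  have "x \<noteq> leftmost t'" using less by auto
  then obtain p where p: "(p, x) \<in> tree_edges t'"
    using tree_edge_to_leaf[of x t'] x leaves by auto
  have "p < x" "p \<in> set (leaves t)"
    using tree_edge_less[OF _ p] tree_edges_in_leaves[OF p] sorted leaves by auto
  then have depth_p: "depth_rec t p + 2 = depth_rec t x + (depth_rec t' x + 1 - depth_rec t x)"
    using agree depth_rec_tree_edge[OF dist p] less by simp
  have "2 \<le> depth_rec t' x + 1 - depth_rec t x" using less by simp
  then obtain W where W: "walk E W"
    "(W (depth_rec t x), W (depth_rec t x + (depth_rec t' x + 1 - depth_rec t x))) \<notin> E"
    using walks by blast
  define f where "f y = W (depth_rec t y + (if y < x then 2 else 0))" for y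
  have "(f p, f x) \<notin> E"
    using W(2) \<open>p < x\<close> depth_p sym unfolding f_def by (auto dest: symD)
  then have "\<not> tree_hom E f t'" using p unfolding tree_hom_def by blast
  moreover have "tree_hom E f t" unfolding f_def using tree_hom_along_walk[OF sym W(1) sorted] .
  moreover have "f ` set (leaves t) \<subseteq> V"
    using W(1) EV unfolding f_def walk_def by blast
  ultimately show ?thesis by blast
qed

lemma not_satisfies_if_walks:
  assumes EV: "E \<subseteq> V \<times> V" and sym: "sym E"
    and walks: "\<And>m a. 2 \<le> m \<Longrightarrow> \<exists>W. walk E W \<and> (W a, W (a + m)) \<notin> E"
    and t: "t \<in> B n" and t': "t' \<in> B n" and "t \<noteq> t'"
  shows "\<not> satisfies V E t t'"
proof -
  have leaves: "leaves t' = leaves t" "set (leaves t) = {1..n}"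
    using leaves_B[OF t] leaves_B[OF t'] set_leaves_B[OF t] by simp_all
  have "\<exists>x\<in>{1..n}. depth_rec t x \<noteq> depth_rec t' x"
    using depth_rec_inj[OF distinct_leaves_B[OF t] leaves(1)] \<open>t \<noteq> t'\<close> leaves(2) by blast
  then obtain x where x: "x \<in> {1..n}" "depth_rec t x \<noteq> depth_rec t' x"
    and first: "\<And>y. y \<in> {1..n} \<Longrightarrow> y < x \<Longrightarrow> depth_rec t y = depth_rec t' y"
    using exists_least_iff[of "\<lambda>x. x \<in> {1..n} \<and> depth_rec t x \<noteq> depth_rec t' x"] by blast
  have "\<exists>f. f ` {1..n} \<subseteq> V \<and> \<not> (tree_hom E f t \<longleftrightarrow> tree_hom E f t')"
  proof (cases "depth_rec t x < depth_rec t' x")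
    case True
    then show ?thesis
      using tree_hom_separation[OF EV sym walks leaves(1) sorted_leaves_B[OF t]] x first leaves
      by fastforce
  next
    case False
    then have "depth_rec t' x < depth_rec t x" using x(2) by simp
    then show ?thesis
      using tree_hom_separation[OF EV sym walks leaves(1)[symmetric] sorted_leaves_B[OF t']]
        x first leaves by fastforce
  qed
  then show ?thesis using satisfies_B_iff[OF t t'] by blast
qed

lemma satisfies_iff_even_M:
  assumes EV: "E \<subseteq> V \<times> V"
    and comps: "\<forall>K \<in> components V E.
      trivial_comp E K \<or> complete_loops_comp E K \<or> complete_bipartite_comp E K"
    and bip: "complete_bipartite_comp E K" and ts: "t \<in> B n" "t' \<in> B n" "t \<noteq> t'"
  shows "satisfies V E t t' \<longleftrightarrow> even (M n t t')"
proof -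
  obtain a b where ab: "(a, b) \<in> E" "(b, a) \<in> E" "(a, a) \<notin> E" "(b, b) \<notin> E"
    using loopless_edge_if_complete_bipartite[OF bip] .
  have "satisfies V E t t' \<longleftrightarrow> (\<forall>x\<in>{1..n}. even (depth_rec t x) \<longleftrightarrow> even (depth_rec t' x))"
    using depth_parity_if_satisfies[OF EV ab ts(1,2)] satisfies_if_depth_parity[OF comps ts]
    by blast
  then show ?thesis using even_M_iff[OF ts(1,2)] by simp
qed

lemma not_satisfies_if_bad_component:
  assumes EV: "E \<subseteq> V \<times> V" and sym: "sym E" and K: "K \<in> components V E"
    and bad: "\<not> (trivial_comp E K \<or> complete_loops_comp E K \<or> complete_bipartite_comp E K)"
    and ts: "t \<in> B n" "t' \<in> B n" "t \<noteq> t'"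
  shows "\<not> satisfies V E t t'"
proof -
  obtain v where "K = component E v" using K by (auto simp: components_def)
  with bad show ?thesis
    using not_satisfies_if_walks[OF EV sym bad_component_walk[OF sym] ts] by simp
qed

theorem proposition7p1:
  fixes V :: "'a set" and E :: "('a \<times> 'a) set"
  assumes "undirected_graph V E"
  shows
    "((\<forall>K \<in> components V E. trivial_comp E K \<or> complete_loops_comp E K) \<longrightarrow>
        (\<forall>n. \<forall>t \<in> B n. \<forall>t' \<in> B n. satisfies V E t t'))
   \<and> (((\<forall>K \<in> components V E. trivial_comp E K \<or> complete_loops_comp E K
                               \<or> complete_bipartite_comp E K)
        \<and> (\<exists>K \<in> components V E. complete_bipartite_comp E K)) \<longrightarrow>
        (\<forall>n. \<forall>t \<in> B n. \<forall>t' \<in> B n. t \<noteq> t' \<longrightarrow>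
              (satisfies V E t t' \<longleftrightarrow> even (M n t t'))))
   \<and> (\<not> (\<forall>K \<in> components V E. trivial_comp E K \<or> complete_loops_comp E K
                               \<or> complete_bipartite_comp E K) \<longrightarrow>
        (\<forall>n. \<forall>t \<in> B n. \<forall>t' \<in> B n. t \<noteq> t' \<longrightarrow> \<not> satisfies V E t t'))"
proof -
  have EV: "E \<subseteq> V \<times> V" and sym: "sym E"
    using assms by (auto simp: undirected_graph_def)
  show ?thesis
    using satisfies_if_complete_loops_components satisfies_iff_even_M[OF EV]
      not_satisfies_if_bad_component[OF EV sym] by blast
qed

end
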